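(* Let $\{\Sigma_t\}_{t\in[0,T]}$ be a smooth solution of inverse mean curvature flow in a Riemannian 3-manifold, foliating $U_T=\bigcup_{t\in[0,T]}\Sigma_t$, such that $\mathrm{Diam}(\Sigma_t)\le D$ for all $t\in[0,T]$ and $\frac{1}{H(x,t)}\le h(t)$ for $t\in[0,T]$, where $h\in L^1([0,T])$. Then $$\mathrm{Diam}(U_T)\le\int_0^Th(t)\,dt+D,$$ in particular $\mathrm{Diam}(U_T)$ is bounded by a finite constant.
   Context: A smooth solution of inverse mean curvature flow (IMCF) is a smooth family of embeddings $F:\Sigma\times[0,T]\to M$ of a closed surface with mean curvature $H>0$ and $\partial_tF=\nu/H$, $\nu$ the outward unit normal; $\Sigma_t=F(\Sigma,t)$. $\mathrm{Diam}(\Sigma_t)$ is the intrinsic diameter of $\Sigma_t$ with its induced metric, and $\mathrm{Diam}(U_T)$ is the diameter of $U_T\cong\Sigma\times[0,T]$ with respect to the length distance of the metric $\hat g=\frac{1}{H(x,t)^2}dt^2+g(x,t)$, where $g(x,t)$ is the induced metric on $\Sigma_t$ (i.e. the ambient metric restricted to $U_T$ in flow coordinates). *)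

theory Defs
  imports "HOL-Analysis.Analysis"
begin

(* C^infinity maps on an open set: Frechet differentiable, and every directional
   derivative x |-> D x v is again C^infinity (coinductively). *)
coinductive smooth_on :: "'a::real_normed_vector set \<Rightarrow> ('a \<Rightarrow> 'b::real_normed_vector) \<Rightarrow> bool"
  where "\<lbrakk>open U; \<And>x. x \<in> U \<Longrightarrow> (f has_derivative D x) (at x);
          \<And>v. smooth_on U (\<lambda>x. D x v)\<rbrakk> \<Longrightarrow> smooth_on U f"

definition closed_smooth_surface :: "'a::euclidean_space set \<Rightarrow> bool" where
  "closed_smooth_surface S \<longleftrightarrow> compact S \<and>
     (\<forall>p\<in>S. \<exists>U (V :: (real^2) set) \<psi> \<phi>. open U \<and> p \<in> U \<and> open V \<and>
        smooth_on V \<psi> \<and> homeomorphism V (S \<inter> U) \<psi> \<phi> \<and>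
        (\<forall>y\<in>V. \<forall>D. (\<psi> has_derivative D) (at y) \<longrightarrow> inj D))"

definition tangent_space :: "'a::euclidean_space set \<Rightarrow> 'a \<Rightarrow> 'a set" where
  "tangent_space S p = {v. \<exists>\<gamma>. \<gamma> ` {-1..1} \<subseteq> S \<and> \<gamma> 0 = p \<and>
        (\<gamma> has_vector_derivative v) (at 0 within {-1..1})}"

(* g x t is the metric g(x,t) on T_x Sigma (given as the restriction of an ambient
   bilinear form); smooth family of Riemannian metrics on S for t in [0,T]. *)
definition smooth_metric_family ::
  "'a::euclidean_space set \<Rightarrow> real \<Rightarrow> ('a \<Rightarrow> real \<Rightarrow> 'a \<Rightarrow> 'a \<Rightarrow> real) \<Rightarrow> bool" where
  "smooth_metric_family S T g \<longleftrightarrow>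
     (\<exists>W. open W \<and> S \<times> {0..T} \<subseteq> W \<and> (\<forall>u v. smooth_on W (\<lambda>(x,t). g x t u v))) \<and>
     (\<forall>x\<in>S. \<forall>t\<in>{0..T}. bilinear (g x t) \<and>
        (\<forall>u\<in>tangent_space S x. \<forall>v\<in>tangent_space S x. g x t u v = g x t v u) \<and>
        (\<forall>u\<in>tangent_space S x. u \<noteq> 0 \<longrightarrow> g x t u u > 0))"

definition admissible_curve :: "(real \<Rightarrow> 'b::euclidean_space) \<Rightarrow> 'b set \<Rightarrow> bool" where
  "admissible_curve \<gamma> A \<longleftrightarrow> \<gamma> piecewise_C1_differentiable_on {0..1} \<and> \<gamma> ` {0..1} \<subseteq> A"

(* length of a curve w.r.t. a (possibly degenerate off tangent vectors) metric given by
   Q p v = |v|^2_p *)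
definition curve_length :: "('b::euclidean_space \<Rightarrow> 'b \<Rightarrow> real) \<Rightarrow> (real \<Rightarrow> 'b) \<Rightarrow> ennreal" where
  "curve_length Q \<gamma> =
     (\<integral>\<^sup>+ s \<in> {0..1}. ennreal (sqrt (Q (\<gamma> s) (vector_derivative \<gamma> (at s)))) \<partial>lborel)"

definition length_dist :: "('b::euclidean_space \<Rightarrow> 'b \<Rightarrow> real) \<Rightarrow> 'b set \<Rightarrow> 'b \<Rightarrow> 'b \<Rightarrow> ennreal" where
  "length_dist Q A p q =
     Inf {curve_length Q \<gamma> | \<gamma>. admissible_curve \<gamma> A \<and> \<gamma> 0 = p \<and> \<gamma> 1 = q}"

definition length_diam :: "('b::euclidean_space \<Rightarrow> 'b \<Rightarrow> real) \<Rightarrow> 'b set \<Rightarrow> ereal" where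
  "length_diam Q A = Sup ((\<lambda>(p,q). enn2ereal (length_dist Q A p q)) ` (A \<times> A))"

definition diam_slice :: "'a::euclidean_space set \<Rightarrow> ('a \<Rightarrow> real \<Rightarrow> 'a \<Rightarrow> 'a \<Rightarrow> real) \<Rightarrow> real \<Rightarrow> ereal" where
  "diam_slice S g t = length_diam (\<lambda>x v. g x t v v) S"

(* diameter of U_T = Sigma x [0,T] with ghat = dt^2 / H^2 + g(x,t) *)
definition diam_UT :: "'a::euclidean_space set \<Rightarrow> real \<Rightarrow> ('a \<Rightarrow> real \<Rightarrow> 'a \<Rightarrow> 'a \<Rightarrow> real)
                        \<Rightarrow> ('a \<Rightarrow> real \<Rightarrow> real) \<Rightarrow> ereal" where
  "diam_UT S T g H = length_diam
     (\<lambda>(x,t) (v,\<tau>). \<tau>\<^sup>2 / (H x t)\<^sup>2 + g x t v v) (S \<times> {0..T})"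

end

theory Submission
  imports Defs
begin

(* Two points (x, s) and (y, t) of U_T are joined by first following the flow line of x from
   time s to time t, whose length dt/H is at most the integral of h over [0, T], and then a
   curve in the slice at time t whose length is close to the intrinsic distance, at most D. *)

lemma ennreal_add_Inf: "(c::ennreal) + Inf S = (INF x\<in>S. c + x)"
proof (cases "S = {}")
  case False
  show ?thesis
    by (rule continuous_at_Inf_mono)
       (use False in \<open>auto simp: mono_def add_left_mono intro!: continuous_intros\<close>)
qed simp

(* Curve speeds are not known to be measurable, so the next two lemmas bound the lower
   integral of an arbitrary f through the simple functions below it. *)
lemma nn_integral_le_real_affine:
  fixes f :: "real \<Rightarrow> ennreal" and c t :: real
  assumes c: "c \<noteq> 0"
  shows "(\<integral>\<^sup>+x. f x \<partial>lborel) \<le> (\<integral>\<^sup>+x. ennreal \<bar>c\<bar> * f (t + c * x) \<partial>lborel)"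
  unfolding nn_integral_def[of lborel f]
proof (rule SUP_least)
  fix g assume "g \<in> {g. simple_function lborel g \<and> g \<le> f}"
  then have sg: "simple_function lborel g" and gf: "g \<le> f" by auto
  have gm: "g \<in> borel_measurable borel"
    using borel_measurable_simple_function[OF sg] by simp
  have "integral\<^sup>S lborel g = (\<integral>\<^sup>+x. g x \<partial>lborel)"
    using nn_integral_eq_simple_integral[OF sg] by simp
  also have "\<dots> = ennreal \<bar>c\<bar> * (\<integral>\<^sup>+x. g (t + c * x) \<partial>lborel)"
    using nn_integral_real_affine[OF gm c] by simp
  also have "\<dots> = (\<integral>\<^sup>+x. ennreal \<bar>c\<bar> * g (t + c * x) \<partial>lborel)"
    by (rule nn_integral_cmult[symmetric]) (use gm in measurable)
  also have "\<dots> \<le> (\<integral>\<^sup>+x. ennreal \<bar>c\<bar> * f (t + c * x) \<partial>lborel)"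
    by (intro nn_integral_mono mult_left_mono) (use gf in \<open>auto simp: le_fun_def\<close>)
  finally show "integral\<^sup>S lborel g \<le> (\<integral>\<^sup>+x. ennreal \<bar>c\<bar> * f (t + c * x) \<partial>lborel)" .
qed

lemma nn_integral_le_split:
  fixes f :: "real \<Rightarrow> ennreal"
  assumes A: "A \<in> sets lborel"
  shows "(\<integral>\<^sup>+x. f x \<partial>lborel)
    \<le> (\<integral>\<^sup>+x. f x * indicator A x \<partial>lborel) + (\<integral>\<^sup>+x. f x * indicator (-A) x \<partial>lborel)"
  unfolding nn_integral_def[of lborel f]
proof (rule SUP_least)
  fix g assume "g \<in> {g. simple_function lborel g \<and> g \<le> f}"
  then have sg: "simple_function lborel g" and gf: "g \<le> f" by auto
  have gm: "g \<in> borel_measurable lborel"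
    using borel_measurable_simple_function[OF sg] by simp
  have "integral\<^sup>S lborel g = (\<integral>\<^sup>+x. g x \<partial>lborel)"
    using nn_integral_eq_simple_integral[OF sg] by simp
  also have "\<dots> = (\<integral>\<^sup>+x. g x * indicator A x + g x * indicator (-A) x \<partial>lborel)"
    by (intro nn_integral_cong) (auto simp: indicator_def)
  also have "\<dots> = (\<integral>\<^sup>+x. g x * indicator A x \<partial>lborel) + (\<integral>\<^sup>+x. g x * indicator (-A) x \<partial>lborel)"
    by (rule nn_integral_add) (use gm A in auto)
  also have "\<dots> \<le> (\<integral>\<^sup>+x. f x * indicator A x \<partial>lborel) + (\<integral>\<^sup>+x. f x * indicator (-A) x \<partial>lborel)"
    by (intro add_mono nn_integral_mono mult_right_mono) (use gf in \<open>auto simp: le_fun_def\<close>)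
  finally show "integral\<^sup>S lborel g \<le> \<dots>" .
qed

lemma nn_integral_double_speed_le:
  fixes f :: "real \<Rightarrow> ennreal"
  shows "(\<integral>\<^sup>+r. 2 * f (2 * r - a) \<partial>lborel) \<le> (\<integral>\<^sup>+u. f u \<partial>lborel)"
proof -
  have half: "inverse 2 * 2 = (1::ennreal)"
    using ennreal_divide_self[of 2] by (simp add: divide_ennreal_def mult.commute)
  have "(\<integral>\<^sup>+r. 2 * f (2 * r - a) \<partial>lborel)
      \<le> (\<integral>\<^sup>+u. ennreal \<bar>1/2\<bar> * (2 * f (2 * (a/2 + 1/2 * u) - a)) \<partial>lborel)"
    by (rule nn_integral_le_real_affine) simp
  also have "\<dots> = (\<integral>\<^sup>+u. f u \<partial>lborel)"
    by (simp add: mult.assoc[symmetric] half)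
  finally show ?thesis .
qed

lemma has_vector_derivative_joinpaths_left:
  assumes "(g1 has_vector_derivative v) (at (2 * r))" and "r < 1/2"
  shows "((g1 +++ g2) has_vector_derivative 2 *\<^sub>R v) (at r)"
proof -
  have "((g1 \<circ> (\<lambda>r. 2 * r)) has_vector_derivative 2 *\<^sub>R v) (at r)"
    by (rule vector_diff_chain_at[of "\<lambda>r. 2 * r" 2 r g1 v, OF _ assms(1)])
       (auto intro!: derivative_eq_intros)
  then show ?thesis
    by (rule has_vector_derivative_transform_within_open[where S = "{..<1/2}"])
       (use assms(2) in \<open>auto simp: joinpaths_def\<close>)
qed

lemma has_vector_derivative_joinpaths_right:
  assumes "(g2 has_vector_derivative v) (at (2 * r - 1))" and "1/2 < r"
  shows "((g1 +++ g2) has_vector_derivative 2 *\<^sub>R v) (at r)"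
proof -
  have "((g2 \<circ> (\<lambda>r. 2 * r - 1)) has_vector_derivative 2 *\<^sub>R v) (at r)"
    by (rule vector_diff_chain_at[of "\<lambda>r. 2 * r - 1" 2 r g2 v, OF _ assms(1)])
       (auto intro!: derivative_eq_intros)
  then show ?thesis
    by (rule has_vector_derivative_transform_within_open[where S = "{1/2<..}"])
       (use assms(2) in \<open>auto simp: joinpaths_def\<close>)
qed

lemma valid_path_differentiable_off_finite:
  assumes "valid_path g"
  obtains K where "finite K" "\<And>u. u \<in> {0..1} - K \<Longrightarrow> g differentiable at u"
  using assms unfolding valid_path_def piecewise_C1_differentiable_on_def C1_differentiable_on_eq
  by blast

lemma valid_path_Pair_const:
  assumes "valid_path \<gamma>"
  shows "valid_path (\<lambda>r. (\<gamma> r, c))"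
proof -
  obtain K D where "finite K" "continuous_on {0..1} \<gamma>"
    "\<And>u. u \<in> {0..1} - K \<Longrightarrow> (\<gamma> has_vector_derivative D u) (at u)"
    "continuous_on ({0..1} - K) D"
    using assms unfolding valid_path_def piecewise_C1_differentiable_on_def C1_differentiable_on_def
    by blast
  then show ?thesis
    unfolding valid_path_def piecewise_C1_differentiable_on_def C1_differentiable_on_def
    by (intro conjI exI[of _ K] exI[of _ "\<lambda>u. (D u, 0)"] ballI continuous_on_Pair
        continuous_on_const has_vector_derivative_Pair has_vector_derivative_const) auto
qed

definition curve_speed ::
  "('b::euclidean_space \<Rightarrow> 'b \<Rightarrow> real) \<Rightarrow> (real \<Rightarrow> 'b) \<Rightarrow> real \<Rightarrow> ennreal"
  where "curve_speed Q \<gamma> u = ennreal (sqrt (Q (\<gamma> u) (vector_derivative \<gamma> (at u))))"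

lemma curve_length_eq_speed:
  "curve_length Q \<gamma> = (\<integral>\<^sup>+u. curve_speed Q \<gamma> u * indicator {0..1} u \<partial>lborel)"
  by (simp add: curve_length_def curve_speed_def)

lemma curve_speed_double:
  assumes "(\<gamma> has_vector_derivative v) (at u)" and "(c has_vector_derivative 2 *\<^sub>R v) (at r)"
    and "c r = \<gamma> u" and "Q (\<gamma> u) (2 *\<^sub>R v) = 4 * Q (\<gamma> u) v"
  shows "curve_speed Q c r = 2 * curve_speed Q \<gamma> u"
proof -
  have "sqrt (Q (c r) (vector_derivative c (at r)))
      = 2 * sqrt (Q (\<gamma> u) (vector_derivative \<gamma> (at u)))"
    using assms by (simp add: vector_derivative_at real_sqrt_mult)
  then show ?thesis
    by (simp add: curve_speed_def ennreal_mult')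
qed

(* Where a curve is not differentiable its vector_derivative is a junk value, so speeds can
   only be compared off the finite set of such points. *)
lemma curve_speed_joinpaths_left_AE:
  assumes adm: "admissible_curve g1 A"
    and hom: "\<And>p v. p \<in> A \<Longrightarrow> Q p (2 *\<^sub>R v) = 4 * Q p v"
  shows "AE r in lborel. curve_speed Q (g1 +++ g2) r * indicator {0..1/2} r
           \<le> 2 * (curve_speed Q g1 (2 * r) * indicator {0..1} (2 * r))"
proof -
  obtain K where "finite K" and diff: "\<And>u. u \<in> {0..1} - K \<Longrightarrow> g1 differentiable at u"
    using adm valid_path_differentiable_off_finite unfolding admissible_curve_def valid_path_def
    by blast
  have "AE r in lborel. r \<notin> insert (1/2) ((\<lambda>u. u / 2) ` K)"
    by (intro AE_not_in finite_imp_null_set_lborel) (use \<open>finite K\<close> in auto)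
  then show ?thesis
  proof (rule eventually_mono)
    fix r :: real assume r: "r \<notin> insert (1/2) ((\<lambda>u. u / 2) ` K)"
    show "curve_speed Q (g1 +++ g2) r * indicator {0..1/2} r
        \<le> 2 * (curve_speed Q g1 (2 * r) * indicator {0..1} (2 * r))"
    proof (cases "r \<in> {0..<1/2}")
      case True
      have "2 * r \<notin> K"
      proof
        assume "2 * r \<in> K"
        then have "2 * r / 2 \<in> (\<lambda>u. u / 2) ` K"
          by blast
        then show False
          using r by simp
      qed
      then have u: "2 * r \<in> {0..1} - K"
        using True by simp
      have g1D: "(g1 has_vector_derivative vector_derivative g1 (at (2 * r))) (at (2 * r))"
        using diff[OF u] by (simp add: vector_derivative_works)
      have "g1 (2 * r) \<in> A"
        using adm u by (auto simp: admissible_curve_def)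
      then have "curve_speed Q (g1 +++ g2) r = 2 * curve_speed Q g1 (2 * r)"
        by (intro curve_speed_double[OF g1D has_vector_derivative_joinpaths_left[OF g1D]])
           (use True hom in \<open>auto simp: joinpaths_def\<close>)
      then show ?thesis
        using True by simp
    next
      case False
      then have "r \<notin> {0..1/2}"
        using r by auto
      then show ?thesis
        by simp
    qed
  qed
qed

lemma curve_speed_joinpaths_right_AE:
  assumes adm: "admissible_curve g2 A"
    and hom: "\<And>p v. p \<in> A \<Longrightarrow> Q p (2 *\<^sub>R v) = 4 * Q p v"
  shows "AE r in lborel. curve_speed Q (g1 +++ g2) r * indicator {1/2<..1} r
           \<le> 2 * (curve_speed Q g2 (2 * r - 1) * indicator {0..1} (2 * r - 1))"
proof -
  obtain K where "finite K" and diff: "\<And>u. u \<in> {0..1} - K \<Longrightarrow> g2 differentiable at u"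
    using adm valid_path_differentiable_off_finite unfolding admissible_curve_def valid_path_def
    by blast
  have "AE r in lborel. r \<notin> (\<lambda>u. (u + 1) / 2) ` K"
    by (intro AE_not_in finite_imp_null_set_lborel) (use \<open>finite K\<close> in auto)
  then show ?thesis
  proof (rule eventually_mono)
    fix r :: real assume r: "r \<notin> (\<lambda>u. (u + 1) / 2) ` K"
    show "curve_speed Q (g1 +++ g2) r * indicator {1/2<..1} r
        \<le> 2 * (curve_speed Q g2 (2 * r - 1) * indicator {0..1} (2 * r - 1))"
    proof (cases "r \<in> {1/2<..1}")
      case True
      have u: "2 * r - 1 \<in> {0..1} - K"
        using True r by (auto simp: image_iff)
      have g2D:
        "(g2 has_vector_derivative vector_derivative g2 (at (2 * r - 1))) (at (2 * r - 1))"
        using diff[OF u] by (simp add: vector_derivative_works)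
      have "g2 (2 * r - 1) \<in> A"
        using adm u by (auto simp: admissible_curve_def)
      then have "curve_speed Q (g1 +++ g2) r = 2 * curve_speed Q g2 (2 * r - 1)"
        by (intro curve_speed_double[OF g2D has_vector_derivative_joinpaths_right[OF g2D]])
           (use True hom in \<open>auto simp: joinpaths_def\<close>)
      then show ?thesis
        using True u by simp
    qed simp
  qed
qed

lemma curve_length_joinpaths_le:
  assumes "admissible_curve g1 A" and "admissible_curve g2 A"
    and "\<And>p v. p \<in> A \<Longrightarrow> Q p (2 *\<^sub>R v) = 4 * Q p v"
  shows "curve_length Q (g1 +++ g2) \<le> curve_length Q g1 + curve_length Q g2"
proof -
  let ?v = "curve_speed Q (g1 +++ g2)"
  have "curve_length Q (g1 +++ g2)
      \<le> (\<integral>\<^sup>+r. ?v r * indicator {0..1} r * indicator {..1/2} r \<partial>lborel)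
        + (\<integral>\<^sup>+r. ?v r * indicator {0..1} r * indicator (- {..1/2}) r \<partial>lborel)"
    unfolding curve_length_eq_speed by (rule nn_integral_le_split) simp
  also have "\<dots> = (\<integral>\<^sup>+r. ?v r * indicator {0..1/2} r \<partial>lborel)
      + (\<integral>\<^sup>+r. ?v r * indicator {1/2<..1} r \<partial>lborel)"
    by (intro arg_cong2[where f = "(+)"] nn_integral_cong) (auto simp: indicator_def)
  also have "\<dots> \<le> (\<integral>\<^sup>+r. 2 * (curve_speed Q g1 (2 * r) * indicator {0..1} (2 * r)) \<partial>lborel)
      + (\<integral>\<^sup>+r. 2 * (curve_speed Q g2 (2 * r - 1) * indicator {0..1} (2 * r - 1)) \<partial>lborel)"
    using assms by (intro add_mono nn_integral_mono_AE curve_speed_joinpaths_left_AE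
        curve_speed_joinpaths_right_AE)
  also have "\<dots> \<le> curve_length Q g1 + curve_length Q g2"
    unfolding curve_length_eq_speed
    using nn_integral_double_speed_le[of "\<lambda>u. curve_speed Q g1 u * indicator {0..1} u" 0]
      nn_integral_double_speed_le[of "\<lambda>u. curve_speed Q g2 u * indicator {0..1} u" 1]
    by (intro add_mono) simp_all
  finally show ?thesis .
qed

lemma admissible_curve_join:
  assumes "admissible_curve g1 A" and "admissible_curve g2 A" and "g1 1 = g2 0"
  shows "admissible_curve (g1 +++ g2) A"
proof -
  have "valid_path (g1 +++ g2)"
    using assms by (intro valid_path_join) (auto simp: admissible_curve_def valid_path_def
        pathfinish_def pathstart_def)
  moreover have "path_image (g1 +++ g2) \<subseteq> A"
    using path_image_join_subset[of g1 g2] assms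
    by (auto simp: admissible_curve_def path_image_def)
  ultimately show ?thesis
    by (simp add: admissible_curve_def valid_path_def path_image_def)
qed

lemma length_dist_le_length_diam:
  assumes "p \<in> A" and "q \<in> A"
  shows "enn2ereal (length_dist Q A p q) \<le> length_diam Q A"
  unfolding length_diam_def by (rule SUP_upper2[of "(p, q)"]) (use assms in auto)

definition flow_metric ::
  "('a \<Rightarrow> real \<Rightarrow> real) \<Rightarrow> ('a \<Rightarrow> real \<Rightarrow> 'a \<Rightarrow> 'a \<Rightarrow> real)
    \<Rightarrow> 'a \<times> real \<Rightarrow> 'a \<times> real \<Rightarrow> real"
  where "flow_metric H g = (\<lambda>(x, t) (v, \<tau>). \<tau>\<^sup>2 / (H x t)\<^sup>2 + g x t v v)"

lemma diam_UT_eq_length_diam: "diam_UT S T g H = length_diam (flow_metric H g) (S \<times> {0..T})"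
  by (simp add: diam_UT_def flow_metric_def)

lemma flow_metric_scaleR_2:
  assumes "bilinear (g x t)"
  shows "flow_metric H g (x, t) (2 *\<^sub>R w) = 4 * flow_metric H g (x, t) w"
  using assms by (cases w)
    (simp add: flow_metric_def bilinear_lmul bilinear_rmul power_mult_distrib add_divide_distrib)

lemma curve_length_flow_metric_horizontal:
  assumes "valid_path \<gamma>"
  shows "curve_length (flow_metric H g) (\<lambda>r. (\<gamma> r, t)) = curve_length (\<lambda>x v. g x t v v) \<gamma>"
proof -
  obtain K where "finite K" and diff: "\<And>u. u \<in> {0..1} - K \<Longrightarrow> \<gamma> differentiable at u"
    using assms valid_path_differentiable_off_finite by blast
  have "AE u in lborel. u \<notin> K"
    by (intro AE_not_in finite_imp_null_set_lborel) fact
  then have "AE u in lborel.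
      curve_speed (flow_metric H g) (\<lambda>r. (\<gamma> r, t)) u * indicator {0..1} u
      = curve_speed (\<lambda>x v. g x t v v) \<gamma> u * indicator {0..1} u"
  proof (rule eventually_mono)
    fix u assume "u \<notin> K"
    show "curve_speed (flow_metric H g) (\<lambda>r. (\<gamma> r, t)) u * indicator {0..1} u
      = curve_speed (\<lambda>x v. g x t v v) \<gamma> u * indicator {0..1} u"
    proof (cases "u \<in> {0..1}")
      case True
      then have "(\<gamma> has_vector_derivative vector_derivative \<gamma> (at u)) (at u)"
        using diff \<open>u \<notin> K\<close> by (simp add: vector_derivative_works)
      then have "((\<lambda>r. (\<gamma> r, t)) has_vector_derivative (vector_derivative \<gamma> (at u), 0)) (at u)"
        by (intro has_vector_derivative_Pair has_vector_derivative_const)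
      then show ?thesis
        by (simp add: curve_speed_def flow_metric_def vector_derivative_at)
    qed simp
  qed
  then show ?thesis
    unfolding curve_length_eq_speed by (rule nn_integral_cong_AE)
qed

lemma curve_length_flow_metric_vertical_le:
  assumes s: "s \<in> {0..T}" and t: "t \<in> {0..T}"
    and H_pos: "\<And>\<tau>. \<tau> \<in> {0..T} \<Longrightarrow> H x \<tau> > 0"
    and H_bound: "\<And>\<tau>. \<tau> \<in> {0..T} \<Longrightarrow> 1 / H x \<tau> \<le> h \<tau>"
    and bil: "\<And>\<tau>. \<tau> \<in> {0..T} \<Longrightarrow> bilinear (g x \<tau>)"
    and h_L1: "set_integrable lborel {0..T} h"
  shows "curve_length (flow_metric H g) (linepath (x, s) (x, t))
    \<le> ennreal (set_lebesgue_integral lborel {0..T} h)"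
proof -
  define f where "f u = ennreal (indicator {0..T} u *\<^sub>R h u)" for u
  have f_meas: "f \<in> borel_measurable borel"
    using borel_measurable_integrable[OF h_L1[unfolded set_integrable_def]]
    by (simp add: f_def[abs_def] measurable_compose[OF _ measurable_ennreal])
  have speed: "curve_speed (flow_metric H g) (linepath (x, s) (x, t)) r * indicator {0..1} r
      \<le> ennreal \<bar>t - s\<bar> * f (s + (t - s) * r)" for r
  proof (cases "r \<in> {0..1}")
    case True
    define \<tau> where "\<tau> = linepath s t r"
    have "\<tau> \<in> closed_segment s t"
      using True by (simp add: \<tau>_def linepath_in_path)
    then have \<tau>: "\<tau> \<in> {0..T}"
      using closed_segment_subset[OF s t] by auto
    have "linepath (x, s) (x, t) r = (x, \<tau>)"
      by (simp add: linepath_def \<tau>_def scaleR_diff_left)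
    then have "curve_speed (flow_metric H g) (linepath (x, s) (x, t)) r
        = ennreal (\<bar>t - s\<bar> / H x \<tau>)"
      using H_pos[OF \<tau>] bilinear_lzero[OF bil[OF \<tau>]]
      by (simp add: curve_speed_def flow_metric_def real_sqrt_divide)
    also have "\<dots> \<le> ennreal (\<bar>t - s\<bar> * h \<tau>)"
      using mult_left_mono[OF H_bound[OF \<tau>], of "\<bar>t - s\<bar>"] by (intro ennreal_leI) simp
    finally show ?thesis
      using True \<tau> by (simp add: f_def \<tau>_def linepath_def algebra_simps ennreal_mult')
  qed simp
  have "curve_length (flow_metric H g) (linepath (x, s) (x, t))
      \<le> (\<integral>\<^sup>+r. ennreal \<bar>t - s\<bar> * f (s + (t - s) * r) \<partial>lborel)"
    unfolding curve_length_eq_speed by (intro nn_integral_mono speed)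
  also have "\<dots> \<le> (\<integral>\<^sup>+u. f u \<partial>lborel)"
  proof (cases "t = s")
    case False
    then show ?thesis
      using nn_integral_real_affine[OF f_meas, of "t - s" s] f_meas
      by (simp add: nn_integral_cmult)
  qed simp
  also have "\<dots> = ennreal (set_lebesgue_integral lborel {0..T} h)"
  proof -
    have "0 \<le> h u" if "u \<in> {0..T}" for u
      using H_pos[OF that] H_bound[OF that]
      by (meson less_le_trans order.strict_implies_order zero_less_divide_1_iff)
    then show ?thesis
      unfolding f_def set_lebesgue_integral_def using h_L1
      by (intro nn_integral_eq_integral) (auto simp: set_integrable_def indicator_def)
  qed
  finally show ?thesis .
qed

lemma length_dist_flow_metric_le:
  assumes bil: "\<forall>x\<in>S. \<forall>t\<in>{0..T}. bilinear (g x t)"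
    and H_pos: "\<forall>x\<in>S. \<forall>t\<in>{0..T}. H x t > 0"
    and H_bound: "\<forall>x\<in>S. \<forall>t\<in>{0..T}. 1 / H x t \<le> h t"
    and h_L1: "set_integrable lborel {0..T} h"
    and x: "x \<in> S" and s: "s \<in> {0..T}" and t: "t \<in> {0..T}"
  shows "length_dist (flow_metric H g) (S \<times> {0..T}) (x, s) (y, t)
    \<le> ennreal (set_lebesgue_integral lborel {0..T} h) + length_dist (\<lambda>x v. g x t v v) S x y"
proof -
  let ?Q = "flow_metric H g" and ?I = "ennreal (set_lebesgue_integral lborel {0..T} h)"
  have "length_dist ?Q (S \<times> {0..T}) (x, s) (y, t) \<le> ?I + curve_length (\<lambda>x v. g x t v v) \<gamma>"
    if \<gamma>: "admissible_curve \<gamma> S" "\<gamma> 0 = x" "\<gamma> 1 = y" for \<gamma>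
  proof -
    have vertical: "admissible_curve (linepath (x, s) (x, t)) (S \<times> {0..T})"
      using closed_segment_subset[of "(x, s)" "{x} \<times> {0..T}" "(x, t)"] x s t
      by (auto simp: admissible_curve_def valid_path_linepath[unfolded valid_path_def]
          convex_Times path_image_def[symmetric])
    have horizontal: "admissible_curve (\<lambda>r. (\<gamma> r, t)) (S \<times> {0..T})"
      using \<gamma>(1) valid_path_Pair_const[of \<gamma> t] t
      by (auto simp: admissible_curve_def valid_path_def)
    have "length_dist ?Q (S \<times> {0..T}) (x, s) (y, t)
        \<le> curve_length ?Q (linepath (x, s) (x, t) +++ (\<lambda>r. (\<gamma> r, t)))"
      unfolding length_dist_def
      using admissible_curve_join[OF vertical horizontal] \<gamma>
      by (intro Inf_lower) (auto simp: joinpaths_def linepath_def)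
    also have "\<dots> \<le> curve_length ?Q (linepath (x, s) (x, t)) + curve_length ?Q (\<lambda>r. (\<gamma> r, t))"
      using bil by (intro curve_length_joinpaths_le[OF vertical horizontal])
        (auto intro: flow_metric_scaleR_2)
    also have "\<dots> \<le> ?I + curve_length (\<lambda>x v. g x t v v) \<gamma>"
    proof (rule add_mono)
      show "curve_length ?Q (linepath (x, s) (x, t)) \<le> ?I"
        by (rule curve_length_flow_metric_vertical_le[OF s t _ _ _ h_L1])
          (use bil H_pos H_bound x in auto)
      show "curve_length ?Q (\<lambda>r. (\<gamma> r, t)) \<le> curve_length (\<lambda>x v. g x t v v) \<gamma>"
        using \<gamma>(1) curve_length_flow_metric_horizontal[of \<gamma> H g t]
        by (simp add: admissible_curve_def valid_path_def)
    qed
    finally show ?thesis .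
  qed
  then show ?thesis
    unfolding length_dist_def[of "\<lambda>x v. g x t v v"] ennreal_add_Inf
    by (auto intro!: INF_greatest)
qed

theorem lemma3p6:
  fixes S :: "'a::euclidean_space set"
    and T D :: real
    and g :: "'a \<Rightarrow> real \<Rightarrow> 'a \<Rightarrow> 'a \<Rightarrow> real"
    and H :: "'a \<Rightarrow> real \<Rightarrow> real"
    and h :: "real \<Rightarrow> real"
  assumes surf: "closed_smooth_surface S"
    and metric: "smooth_metric_family S T g"
    and H_smooth: "\<exists>W. open W \<and> S \<times> {0..T} \<subseteq> W \<and> smooth_on W (\<lambda>(x,t). H x t)"
    and H_pos: "\<forall>x\<in>S. \<forall>t\<in>{0..T}. H x t > 0"
    and diam_bound: "\<forall>t\<in>{0..T}. diam_slice S g t \<le> ereal D"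
    and h_L1: "set_integrable lborel {0..T} h"
    and H_bound: "\<forall>x\<in>S. \<forall>t\<in>{0..T}. 1 / H x t \<le> h t"
  shows "diam_UT S T g H \<le> ereal (set_lebesgue_integral lborel {0..T} h) + ereal D"
proof -
  define I where "I = set_lebesgue_integral lborel {0..T} h"
  have bil: "\<forall>x\<in>S. \<forall>t\<in>{0..T}. bilinear (g x t)"
    using metric unfolding smooth_metric_family_def by blast
  show ?thesis
    unfolding diam_UT_eq_length_diam length_diam_def I_def[symmetric]
  proof (rule SUP_least, clarify)
    fix x s y t assume x: "x \<in> S" and y: "y \<in> S" and s: "s \<in> {0..T}" and t: "t \<in> {0..T}"
    have "0 \<le> h u" if "u \<in> {0..T}" for u
      using H_pos H_bound x that
      by (meson less_le_trans order.strict_implies_order zero_less_divide_1_iff)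
    then have I_nonneg: "0 \<le> I"
      unfolding I_def set_lebesgue_integral_def
      by (intro Bochner_Integration.integral_nonneg) (auto simp: indicator_def)
    have "enn2ereal (length_dist (flow_metric H g) (S \<times> {0..T}) (x, s) (y, t))
        \<le> enn2ereal (ennreal I + length_dist (\<lambda>x v. g x t v v) S x y)"
      using length_dist_flow_metric_le[OF bil H_pos H_bound h_L1 x s t, of y]
      by (simp add: I_def less_eq_ennreal.rep_eq)
    also have "\<dots> = ereal I + enn2ereal (length_dist (\<lambda>x v. g x t v v) S x y)"
      using I_nonneg by (simp add: plus_ennreal.rep_eq)
    also have "\<dots> \<le> ereal I + ereal D"
      by (intro add_left_mono order_trans[OF length_dist_le_length_diam[OF x y]])
        (use diam_bound t in \<open>auto simp: diam_slice_def\<close>)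
    finally show "enn2ereal (length_dist (flow_metric H g) (S \<times> {0..T}) (x, s) (y, t))
        \<le> ereal I + ereal D" .
  qed
qed

end
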